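(* Let $X$ be a non-empty metric space and let $\mathcal{U}$ be a cover of $X$ (not necessarily open). Then \[ L(\mathcal{U})\leq L_{Diam}(\mathcal{U})\leq 2\cdot L(\mathcal{U}). \]
   Context: For $x\in X$ and $S\subseteq X$, $\operatorname{dist}(x,S)=\inf_{z\in S}d(x,z)$, with $\operatorname{dist}(x,\emptyset)=\infty$. For a cover $\mathcal{U}$ of $X$ (i.e. $X=\bigcup\mathcal{U}$): $L(\mathcal{U},x):=\sup_{U\in\mathcal{U}}\operatorname{dist}(x,X\setminus U)$ and $L(\mathcal{U}):=\inf_{x\in X}L(\mathcal{U},x)$. Also $L_{Diam}(\mathcal{U}):=\sup\{D\geq 0 \mid \text{for every } A\subseteq X \text{ with } \operatorname{diam}A\leq D \text{ there exists } U\in\mathcal{U} \text{ with } A\subseteq U\}$. All these quantities take values in $[0,\infty]$. *)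

theory Defs
  imports "HOL-Analysis.Analysis"
begin

definition setdist_e :: "('a \<Rightarrow> 'a \<Rightarrow> real) \<Rightarrow> 'a \<Rightarrow> 'a set \<Rightarrow> ereal" where
  "setdist_e d x S = (INF z\<in>S. ereal (d x z))"   \<comment> \<open>Inf of empty set is \<infinity>\<close>

definition L_pt :: "'a set \<Rightarrow> ('a \<Rightarrow> 'a \<Rightarrow> real) \<Rightarrow> 'a set set \<Rightarrow> 'a \<Rightarrow> ereal" where
  "L_pt M d \<U> x = (SUP U\<in>\<U>. setdist_e d x (M - U))"

definition L_cov :: "'a set \<Rightarrow> ('a \<Rightarrow> 'a \<Rightarrow> real) \<Rightarrow> 'a set set \<Rightarrow> ereal" where
  "L_cov M d \<U> = (INF x\<in>M. L_pt M d \<U> x)"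

definition diam_e :: "('a \<Rightarrow> 'a \<Rightarrow> real) \<Rightarrow> 'a set \<Rightarrow> ereal" where
  "diam_e d A = (if A = {} then 0 else (SUP p\<in>A \<times> A. ereal (d (fst p) (snd p))))"

definition L_Diam :: "'a set \<Rightarrow> ('a \<Rightarrow> 'a \<Rightarrow> real) \<Rightarrow> 'a set set \<Rightarrow> ereal" where
  "L_Diam M d \<U> = Sup {D. 0 \<le> D \<and> (\<forall>A. A \<subseteq> M \<longrightarrow> diam_e d A \<le> D \<longrightarrow> (\<exists>U\<in>\<U>. A \<subseteq> U))}"

end

theory Submission
  imports Defs
begin

text \<open>If \<open>D < L(\<U>)\<close>, a set \<open>A \<ni> x\<close> of diameter at most \<open>D\<close> cannot meet the complement of the
  member \<open>U\<close> realising \<open>D < dist(x, X - U)\<close>, so \<open>A \<subseteq> U\<close>; sets of diameter \<open>0\<close> are points and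
  are covered anyway, which gives \<open>L(\<U>) \<le> L\<^sub>D\<^sub>i\<^sub>a\<^sub>m(\<U>)\<close>. Conversely, if every set of diameter
  at most \<open>2r\<close> lies in a member of \<open>\<U>\<close>, then so does every closed ball of radius \<open>r\<close>, whence
  \<open>r \<le> dist(x, X - U)\<close> for some \<open>U\<close>, i.e. \<open>r \<le> L(\<U>, x)\<close> at every point.\<close>

definition diam_covered :: "'a set \<Rightarrow> ('a \<Rightarrow> 'a \<Rightarrow> real) \<Rightarrow> 'a set set \<Rightarrow> ereal \<Rightarrow> bool" where
  "diam_covered M d \<U> D \<longleftrightarrow> (\<forall>A. A \<subseteq> M \<longrightarrow> diam_e d A \<le> D \<longrightarrow> (\<exists>U\<in>\<U>. A \<subseteq> U))"

lemma L_Diam_eq_Sup_diam_covered: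
  "L_Diam M d \<U> = Sup {D. 0 \<le> D \<and> diam_covered M d \<U> D}"
  unfolding L_Diam_def diam_covered_def by simp

lemma diam_covered_antimono:
  assumes "diam_covered M d \<U> D" and "E \<le> D"
  shows "diam_covered M d \<U> E"
  using assms order_trans unfolding diam_covered_def by blast

lemma diam_e_ge_dist:
  assumes "a \<in> A" and "b \<in> A"
  shows "ereal (d a b) \<le> diam_e d A"
proof -
  have "ereal (d (fst (a, b)) (snd (a, b))) \<le> (SUP p\<in>A \<times> A. ereal (d (fst p) (snd p)))"
    by (rule SUP_upper) (use assms in auto)
  then show ?thesis
    using assms unfolding diam_e_def by auto
qed

lemma setdist_e_le_dist: "z \<in> S \<Longrightarrow> setdist_e d x S \<le> ereal (d x z)"
  unfolding setdist_e_def by (rule INF_lower)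

lemma setdist_e_le_L_pt: "U \<in> \<U> \<Longrightarrow> setdist_e d x (M - U) \<le> L_pt M d \<U> x"
  unfolding L_pt_def by (rule SUP_upper)

lemma L_cov_le_L_pt: "x \<in> M \<Longrightarrow> L_cov M d \<U> \<le> L_pt M d \<U> x"
  unfolding L_cov_def by (rule INF_lower)

context Metric_space
begin

lemma setdist_e_nonneg: "0 \<le> setdist_e d x S"
  unfolding setdist_e_def by (rule INF_greatest) simp

lemma L_cov_nonneg:
  assumes "\<U> \<noteq> {}"
  shows "0 \<le> L_cov M d \<U>"
  unfolding L_cov_def
proof (rule INF_greatest)
  fix x
  from assms obtain U where "U \<in> \<U>" by blast
  then have "setdist_e d x (M - U) \<le> L_pt M d \<U> x"
    by (rule setdist_e_le_L_pt)
  with setdist_e_nonneg show "0 \<le> L_pt M d \<U> x"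
    by (rule order_trans)
qed

lemma diam_e_le_0_subset_singleton:
  assumes "A \<subseteq> M" and "diam_e d A \<le> 0" and "a \<in> A"
  shows "A \<subseteq> {a}"
proof
  fix b
  assume "b \<in> A"
  have "ereal (d a b) \<le> diam_e d A"
    using assms(3) \<open>b \<in> A\<close> by (rule diam_e_ge_dist)
  with assms(2) have "d a b \<le> 0"
    by (metis order_trans zero_ereal_def ereal_less_eq(3))
  then have "d a b = 0"
    using nonneg[of a b] by linarith
  with assms(1,3) \<open>b \<in> A\<close> show "b \<in> {a}"
    using zero[of a b] by blast
qed

lemma diam_covered_0:
  assumes "\<Union>\<U> = M" and "\<U> \<noteq> {}"
  shows "diam_covered M d \<U> 0"
  unfolding diam_covered_def
proof (intro allI impI)
  fix A
  assume A: "A \<subseteq> M" "diam_e d A \<le> 0"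
  show "\<exists>U\<in>\<U>. A \<subseteq> U"
  proof (cases "A = {}")
    case True
    then show ?thesis using assms(2) by blast
  next
    case False
    then obtain a where "a \<in> A" by blast
    with A assms(1) obtain U where "U \<in> \<U>" "a \<in> U" by blast
    moreover have "A \<subseteq> {a}"
      using A \<open>a \<in> A\<close> by (rule diam_e_le_0_subset_singleton)
    ultimately show ?thesis by blast
  qed
qed

lemma subset_member_if_diam_less_L_pt:
  assumes "x \<in> A" and "A \<subseteq> M" and "diam_e d A < L_pt M d \<U> x"
  shows "\<exists>U\<in>\<U>. A \<subseteq> U"
proof -
  from assms(3) obtain U where U: "U \<in> \<U>" "diam_e d A < setdist_e d x (M - U)"
    unfolding L_pt_def by (auto simp: less_SUP_iff)
  have "a \<in> U" if "a \<in> A" for a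
  proof (rule ccontr)
    assume "a \<notin> U"
    with that assms(2) have "setdist_e d x (M - U) \<le> ereal (d x a)"
      by (intro setdist_e_le_dist) blast
    also have "\<dots> \<le> diam_e d A"
      using assms(1) that by (rule diam_e_ge_dist)
    finally show False
      using U(2) by simp
  qed
  with U(1) show ?thesis by blast
qed

lemma diam_covered_if_less_L_cov:
  assumes "\<U> \<noteq> {}" and "D < L_cov M d \<U>"
  shows "diam_covered M d \<U> D"
  unfolding diam_covered_def
proof (intro allI impI)
  fix A
  assume A: "A \<subseteq> M" "diam_e d A \<le> D"
  show "\<exists>U\<in>\<U>. A \<subseteq> U"
  proof (cases "A = {}")
    case True
    then show ?thesis using assms(1) by blast
  next
    case False
    then obtain x where "x \<in> A" by blast
    with A have "diam_e d A < L_pt M d \<U> x"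
      using assms(2) L_cov_le_L_pt[of x M d \<U>] by (meson le_less_trans less_le_trans subsetD)
    with \<open>x \<in> A\<close> A(1) show ?thesis
      by (rule subset_member_if_diam_less_L_pt)
  qed
qed

lemma L_cov_le_L_Diam:
  assumes "\<Union>\<U> = M" and "\<U> \<noteq> {}"
  shows "L_cov M d \<U> \<le> L_Diam M d \<U>"
  unfolding L_Diam_eq_Sup_diam_covered
proof (rule dense_le)
  fix D
  assume "D < L_cov M d \<U>"
  with assms(2) have "diam_covered M d \<U> D"
    by (rule diam_covered_if_less_L_cov)
  moreover have "diam_covered M d \<U> 0"
    using assms by (rule diam_covered_0)
  ultimately have "max D 0 \<in> {D. 0 \<le> D \<and> diam_covered M d \<U> D}"
    by (auto simp: max_def)
  then show "D \<le> Sup {D. 0 \<le> D \<and> diam_covered M d \<U> D}"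
    by (meson Sup_upper max.cobounded1 order_trans)
qed

lemma diam_e_mcball_le:
  assumes "0 \<le> r"
  shows "diam_e d (mcball x r) \<le> ereal (2 * r)"
proof (cases "mcball x r = {}")
  case True
  then show ?thesis using assms by (simp add: diam_e_def)
next
  case False
  have "d a b \<le> 2 * r" if "a \<in> mcball x r" "b \<in> mcball x r" for a b
  proof -
    from that have "x \<in> M" "a \<in> M" "b \<in> M" "d x a \<le> r" "d x b \<le> r"
      by auto
    then show ?thesis
      using triangle[of a x b] commute[of a x] by linarith
  qed
  then have "(SUP p\<in>mcball x r \<times> mcball x r. ereal (d (fst p) (snd p))) \<le> ereal (2 * r)"
    by (intro SUP_least) auto
  with False show ?thesis
    unfolding diam_e_def by simp
qed

lemma setdist_e_compl_ge_radius:
  assumes "x \<in> M" and "mcball x r \<subseteq> U"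
  shows "ereal r \<le> setdist_e d x (M - U)"
  unfolding setdist_e_def
proof (rule INF_greatest)
  fix z
  assume "z \<in> M - U"
  with assms have "r < d x z"
    by (meson DiffE in_mcball not_le subsetD)
  then show "ereal r \<le> ereal (d x z)" by simp
qed

lemma le_L_cov_if_diam_covered:
  assumes "diam_covered M d \<U> (ereal (2 * r))" and "0 \<le> r"
  shows "ereal r \<le> L_cov M d \<U>"
  unfolding L_cov_def
proof (rule INF_greatest)
  fix x
  assume "x \<in> M"
  from assms(1) obtain U where U: "U \<in> \<U>" "mcball x r \<subseteq> U"
    using diam_e_mcball_le[OF assms(2), of x] mcball_subset_mspace[of x r]
    unfolding diam_covered_def by blast
  have "ereal r \<le> setdist_e d x (M - U)"
    using \<open>x \<in> M\<close> U(2) by (rule setdist_e_compl_ge_radius)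
  also have "\<dots> \<le> L_pt M d \<U> x"
    using U(1) by (rule setdist_e_le_L_pt)
  finally show "ereal r \<le> L_pt M d \<U> x" .
qed

lemma L_Diam_le_2_L_cov:
  assumes "\<U> \<noteq> {}"
  shows "L_Diam M d \<U> \<le> 2 * L_cov M d \<U>"
  unfolding L_Diam_eq_Sup_diam_covered
proof (rule Sup_least)
  fix D
  assume "D \<in> {D. 0 \<le> D \<and> diam_covered M d \<U> D}"
  then have D: "diam_covered M d \<U> D" by simp
  have two_L_cov_nonneg: "0 \<le> 2 * L_cov M d \<U>"
    using L_cov_nonneg[OF assms] by simp
  show "D \<le> 2 * L_cov M d \<U>"
  proof (rule dense_le)
    fix t
    assume "t < D"
    show "t \<le> 2 * L_cov M d \<U>"
    proof (cases "t \<le> 0")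
      case True
      then show ?thesis using two_L_cov_nonneg by (rule order_trans)
    next
      case False
      with \<open>t < D\<close> obtain s where s: "t = ereal s" "0 < s"
        by (cases t) (auto simp: not_le)
      have "ereal (2 * (s / 2)) \<le> D"
        using \<open>t < D\<close> s(1) by simp
      with D have "diam_covered M d \<U> (ereal (2 * (s / 2)))"
        by (rule diam_covered_antimono)
      then have "ereal (s / 2) \<le> L_cov M d \<U>"
        by (rule le_L_cov_if_diam_covered) (use s(2) in simp)
      then have "2 * ereal (s / 2) \<le> 2 * L_cov M d \<U>"
        by (rule ereal_mult_left_mono) simp
      with s(1) show ?thesis by simp
    qed
  qed
qed

end

theorem lemma2p10:
  fixes M :: "'a set" and d :: "'a \<Rightarrow> 'a \<Rightarrow> real" and \<U> :: "'a set set"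
  assumes "Metric_space M d"
    and "M \<noteq> {}"
    and "\<Union>\<U> = M"
  shows "L_cov M d \<U> \<le> L_Diam M d \<U> \<and> L_Diam M d \<U> \<le> 2 * L_cov M d \<U>"
proof -
  interpret Metric_space M d by fact
  have "\<U> \<noteq> {}"
    using assms(2,3) by auto
  with assms(3) show ?thesis
    using L_cov_le_L_Diam L_Diam_le_2_L_cov by simp
qed

end
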